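(* Let $f(x)=\ln(e-x)$ for $0\le x\le e-1$ and $f(x)=0$ for $x>e-1$. There is a function $\rho(\theta)$ with $\rho(\theta)\to1-1/e$ as $\theta\to0$ such that for every instance with largeness ratio $\theta=c_{\max}/B$, the utility $\sum_iu_if_{r_i}(c_i/u_i)$ obtained by $\mathrm{Truthful}(f)$ (with true costs) is at least $\rho(\theta)U^\star$.
   Context: Setting: a buyer with budget $B>0$ faces a finite set $S$ of sellers; seller $i$ owns one divisible item giving utility $u_i>0$ and has cost $c_i\ge0$; buying fraction $x_i\in[0,1]$ costs $x_ic_i$ and gives utility $x_iu_i$. $U^\star=\max\{\sum_iu_i\alpha_i:\alpha\in[0,1]^S,\sum_ic_i\alpha_i\le B\}$; $c_{\max}=\max_ic_i$. For a non-increasing $f:[0,\infty)\to[0,1]$ with $f(0)=1$, $f(e-1)=0$ and $r>0$: $f_r(x)=f(x/r)$, $Q_r(x)=xf_r(x)+\int_x^\infty f_r(y)\,dy$, $P_{i,r}(x)=u_iQ_r(x/u_i)$. $\mathrm{EnvyFree}(f)$ on cost vector $c$ has stopping rate $r^\star$, the value at which, decreasing $r$ from $\infty$, the nondecreasing function $r\mapsto\sum_iP_{i,r}(c_i)$ first equals $B$. $\mathrm{Truthful}(f)$: for each $i$, $r_i$ is the stopping rate of $\mathrm{EnvyFree}(f)$ on the cost vector obtained from $c$ by setting the $i$-th cost to $0$; it buys $f_{r_i}(c_i/u_i)$ of item $i$ and pays $P_{i,r_i}(c_i)$. *)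

theory Defs
  imports "HOL-Analysis.Analysis"
begin

definition fLog :: "real \<Rightarrow> real" where
  "fLog x = (if 0 \<le> x \<and> x \<le> exp 1 - 1 then ln (exp 1 - x) else 0)"

definition f_rate :: "(real \<Rightarrow> real) \<Rightarrow> real \<Rightarrow> real \<Rightarrow> real" where
  "f_rate f r x = f (x / r)"

definition Q_rate :: "(real \<Rightarrow> real) \<Rightarrow> real \<Rightarrow> real \<Rightarrow> real" where
  "Q_rate f r x = x * f_rate f r x + integral {x..} (f_rate f r)"

definition P_rate :: "(real \<Rightarrow> real) \<Rightarrow> real \<Rightarrow> real \<Rightarrow> real \<Rightarrow> real" where
  "P_rate f ui r x = ui * Q_rate f r (x / ui)"

definition ef_total :: "(real \<Rightarrow> real) \<Rightarrow> nat set \<Rightarrow> (nat \<Rightarrow> real) \<Rightarrow> (nat \<Rightarrow> real) \<Rightarrow> real \<Rightarrow> real" where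
  "ef_total f S u c r = (\<Sum>i\<in>S. P_rate f (u i) r (c i))"

text \<open>Stopping rate of EnvyFree(f): decreasing r from infinity, the first (i.e. the largest)
  positive r at which the total payment equals B.\<close>
definition stopping_rate :: "(real \<Rightarrow> real) \<Rightarrow> nat set \<Rightarrow> (nat \<Rightarrow> real) \<Rightarrow> (nat \<Rightarrow> real) \<Rightarrow> real \<Rightarrow> real" where
  "stopping_rate f S u c B = (GREATEST r. 0 < r \<and> ef_total f S u c r = B)"

definition truthful_rate :: "(real \<Rightarrow> real) \<Rightarrow> nat set \<Rightarrow> (nat \<Rightarrow> real) \<Rightarrow> (nat \<Rightarrow> real) \<Rightarrow> real \<Rightarrow> nat \<Rightarrow> real" where
  "truthful_rate f S u c B i = stopping_rate f S u (c(i := 0)) B"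

definition truthful_utility :: "(real \<Rightarrow> real) \<Rightarrow> nat set \<Rightarrow> (nat \<Rightarrow> real) \<Rightarrow> (nat \<Rightarrow> real) \<Rightarrow> real \<Rightarrow> real" where
  "truthful_utility f S u c B = (\<Sum>i\<in>S. u i * f_rate f (truthful_rate f S u c B i) (c i / u i))"

definition opt_utility :: "nat set \<Rightarrow> (nat \<Rightarrow> real) \<Rightarrow> (nat \<Rightarrow> real) \<Rightarrow> real \<Rightarrow> real" where
  "opt_utility S u c B = Sup {(\<Sum>i\<in>S. u i * \<alpha> i) | \<alpha>.
      (\<forall>i\<in>S. 0 \<le> \<alpha> i \<and> \<alpha> i \<le> 1) \<and> (\<Sum>i\<in>S. c i * \<alpha> i) \<le> B}"

definition cmax :: "nat set \<Rightarrow> (nat \<Rightarrow> real) \<Rightarrow> real" where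
  "cmax S c = Max (c ` S)"

end

theory Submission
  imports Defs
begin

text \<open>Let \<open>R\<close> be the smallest of the rates \<open>r\<^sub>i\<close> of Truthful, attained at seller \<open>k\<close>. Since \<open>f\<^sub>r\<close>
  increases with \<open>r\<close>, Truthful buys at least as much of every item as EnvyFree run at the
  single rate \<open>R\<close> on the true costs. At rate \<open>R\<close> the total payment on the true costs is at least
  \<open>B - e c\<^sub>k\<close>, because setting \<open>c\<^sub>k\<close> to \<open>0\<close> raises the payment of seller \<open>k\<close> by at most \<open>e c\<^sub>k\<close>.
  For \<open>f = fLog\<close> one has \<open>Q\<^sub>1(t) \<le> e f(t)\<close> and, for every fraction \<open>\<alpha> \<in> [0,1]\<close>, the per-item
  inequality \<open>(1 - 1/e) \<alpha> \<le> f(t) + (\<alpha> t - Q\<^sub>1(t)) / e\<close>. Summing it over any feasible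
  fractional solution and using the budget bound yields the ratio \<open>(1 - 1/e)(1 - e \<theta>)\<close>.\<close>

text \<open>Closed form of \<open>Q\<^sub>1\<close> for \<open>f = fLog\<close>; in general \<open>Q\<^sub>r(x) = r Q\<^sub>1(x/r)\<close>.\<close>
definition Q_log :: "real \<Rightarrow> real" where
  "Q_log t = exp 1 * ln (exp 1 - min t (exp 1 - 1)) + min t (exp 1 - 1) + 1 - exp 1"

lemma two_le_exp_1: "2 \<le> exp (1::real)"
  using exp_ge_add_one_self[of 1] by simp

lemma fLog_eq_ln: "0 \<le> t \<Longrightarrow> fLog t = ln (exp 1 - min t (exp 1 - 1))"
  by (auto simp: fLog_def min_def)

lemma fLog_nonneg: "0 \<le> fLog t"
  by (auto simp: fLog_def)

lemma fLog_antimono: "0 \<le> s \<Longrightarrow> s \<le> t \<Longrightarrow> fLog t \<le> fLog s"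
  using two_le_exp_1 by (auto simp: fLog_eq_ln min_def)

lemma Q_log_bounds:
  assumes "0 \<le> t"
  shows "0 \<le> Q_log t" and "Q_log t \<le> 1"
proof -
  define s where "s = exp 1 - min t (exp 1 - 1)"
  have s: "1 \<le> s" "s \<le> exp 1"
    using assms two_le_exp_1 by (auto simp: s_def min_def)
  have Q: "Q_log t = exp 1 * ln s + 1 - s"
    by (simp add: Q_log_def s_def)
  have "ln (1 / s) \<le> 1 / s - 1"
    using s by (intro ln_le_minus_one) auto
  then have "1 - 1 / s \<le> ln s"
    using s by (simp add: ln_div)
  moreover have "s - 1 \<le> exp 1 * (1 - 1 / s)"
  proof -
    have "0 \<le> (exp 1 - s) * (s - 1)"
      using s by simp
    then show ?thesis
      using s by (simp add: field_simps algebra_simps)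
  qed
  ultimately have "s - 1 \<le> exp 1 * ln s"
    by (smt (verit) exp_gt_zero mult_left_mono)
  then show "0 \<le> Q_log t"
    using Q by simp
  have "ln (s / exp 1) \<le> s / exp 1 - 1"
    using s by (intro ln_le_minus_one) auto
  then have "exp 1 * ln s \<le> s"
    using s by (simp add: ln_div field_simps)
  then show "Q_log t \<le> 1"
    using Q by simp
qed

lemma one_minus_Q_log_le:
  assumes "0 \<le> t"
  shows "1 - Q_log t \<le> exp 1 * t"
proof (cases "t \<le> exp 1 - 1")
  case False
  then have "Q_log t = 0"
    by (simp add: Q_log_def min_def)
  moreover have "1 * 1 \<le> exp 1 * t"
    using False two_le_exp_1 by (intro mult_mono) auto
  ultimately show ?thesis
    by simp
next
  case True
  define s where "s = exp 1 - t"
  have s: "1 \<le> s" "s \<le> exp 1"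
    using assms True by (auto simp: s_def)
  have "ln (exp 1 / s) \<le> exp 1 / s - 1"
    using s by (intro ln_le_minus_one) auto
  then have "exp 1 * (2 - exp 1 / s) \<le> exp 1 * ln s"
    using s by (simp add: ln_div)
  then have "1 - Q_log t \<le> s - exp 1 * (2 - exp 1 / s)"
    using True by (simp add: Q_log_def s_def)
  also have "\<dots> = t\<^sup>2 / s"
    using s by (simp add: s_def field_simps power2_eq_square)
  also have "\<dots> \<le> t\<^sup>2"
    using s by (simp add: divide_le_eq mult_le_cancel_left1)
  also have "\<dots> \<le> exp 1 * t"
    using True assms by (simp add: power2_eq_square mult_right_mono)
  finally show ?thesis .
qed

lemma Q_log_le_exp_fLog: "0 \<le> t \<Longrightarrow> Q_log t \<le> exp 1 * fLog t"
  by (simp add: Q_log_def fLog_eq_ln)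

lemma fraction_le_fLog_plus_slack:
  assumes t: "0 \<le> t" and \<alpha>: "0 \<le> \<alpha>" "\<alpha> \<le> 1"
  shows "(1 - 1 / exp 1) * \<alpha> \<le> fLog t + (\<alpha> * t - Q_log t) / exp 1"
proof -
  define m where "m = min t (exp 1 - 1)"
  have key: "(exp 1 - 1) * \<alpha> \<le> \<alpha> * t + exp 1 - m - 1"
  proof (cases "t \<le> exp 1 - 1")
    case True
    then have "(exp 1 - 1 - t) * \<alpha> \<le> (exp 1 - 1 - t) * 1"
      using \<alpha> by (intro mult_left_mono) auto
    then show ?thesis
      using True by (simp add: m_def algebra_simps)
  next
    case False
    then have "(exp 1 - 1) * \<alpha> \<le> t * \<alpha>"
      using \<alpha> by (intro mult_right_mono) auto
    then show ?thesis
      using False by (simp add: m_def algebra_simps)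
  qed
  have "(1 - 1 / exp 1) * \<alpha> = (exp 1 - 1) * \<alpha> / exp 1"
    by (simp add: field_simps)
  also have "\<dots> \<le> (\<alpha> * t + exp 1 - m - 1) / exp 1"
    using key by (intro divide_right_mono) auto
  also have "\<dots> = fLog t + (\<alpha> * t - Q_log t) / exp 1"
    using t by (simp add: fLog_eq_ln Q_log_def m_def field_simps)
  finally show ?thesis .
qed

lemma has_integral_f_rate_fLog:
  assumes x: "0 \<le> x" and r: "0 < r"
  shows "(f_rate fLog r has_integral (r * Q_log (x / r) - x * fLog (x / r))) {x..}"
proof (cases "r * (exp 1 - 1) \<le> x")
  case True
  have xr: "exp 1 - 1 \<le> x / r"
    using True r by (simp add: field_simps)
  have zero: "f_rate fLog r y = 0" if "y \<in> {x..}" for y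
  proof -
    have "exp 1 - 1 \<le> y / r"
      using xr that r by (smt (verit) atLeast_iff divide_right_mono)
    then show ?thesis
      using that x r by (auto simp: f_rate_def fLog_eq_ln min_def zero_le_divide_iff)
  qed
  have "(f_rate fLog r has_integral 0) {x..}"
    by (rule has_integral_eq[where f = "\<lambda>_. 0"]) (use zero in auto)
  moreover have "fLog (x / r) = 0"
    using zero[of x] by (simp add: f_rate_def)
  moreover have "Q_log (x / r) = 0"
    using xr by (simp add: Q_log_def min_def)
  ultimately show ?thesis
    by simp
next
  case False
  define a where "a = r * (exp 1 - 1)"
  have xa: "x < a"
    using False by (simp add: a_def)
  have below_a: "y \<le> a \<longleftrightarrow> y / r \<le> exp 1 - 1" for y
    using r by (simp add: a_def field_simps)
  define G where "G y = - r * ((exp 1 - y / r) * ln (exp 1 - y / r) - (exp 1 - y / r))" for y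
  have "(G has_vector_derivative ln (exp 1 - y / r)) (at y within {x..a})"
    if "y \<in> {x..a}" for y
  proof -
    have pos: "0 < exp 1 - y / r"
      using that below_a[of y] by auto
    have "(G has_real_derivative ln (exp 1 - y / r)) (at y)"
      unfolding G_def[abs_def] by (rule derivative_eq_intros refl | use pos r in simp)+
    then show ?thesis
      by (simp add: has_real_derivative_iff_has_vector_derivative has_vector_derivative_at_within)
  qed
  then have "((\<lambda>y. ln (exp 1 - y / r)) has_integral (G a - G x)) {x..a}"
    using xa by (intro fundamental_theorem_of_calculus) auto
  then have restricted:
    "((\<lambda>y. if y \<in> {x..a} then ln (exp 1 - y / r) else 0) has_integral (G a - G x)) {x..}"
    by (subst has_integral_restrict) auto
  have antiderivative_value: "G a - G x = r * Q_log (x / r) - x * fLog (x / r)"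
  proof -
    have xr: "x / r \<le> exp 1 - 1"
      using xa below_a[of x] by simp
    define L where "L = ln (exp 1 - x / r)"
    have "fLog (x / r) = L"
      using xr x r by (simp add: fLog_eq_ln min_def L_def)
    moreover have "r * Q_log (x / r) = r * exp 1 * L + x + r - r * exp 1"
      using xr r by (simp add: Q_log_def min_def L_def algebra_simps)
    moreover have "G a = r"
      using r by (simp add: G_def a_def)
    moreover have "G x = - r * exp 1 * L + x * L + r * exp 1 - x"
      using r by (simp add: G_def L_def algebra_simps)
    ultimately show ?thesis
      using r by (simp add: algebra_simps)
  qed
  have "(if y \<in> {x..a} then ln (exp 1 - y / r) else 0) = f_rate fLog r y"
    if "y \<in> {x..}" for y
    using that x r below_a[of y] by (auto simp: f_rate_def fLog_def zero_le_divide_iff)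
  from has_integral_eq[OF this restricted[unfolded antiderivative_value]] show ?thesis .
qed

lemma Q_rate_fLog: "0 \<le> x \<Longrightarrow> 0 < r \<Longrightarrow> Q_rate fLog r x = r * Q_log (x / r)"
  using has_integral_f_rate_fLog[of x r] by (simp add: Q_rate_def f_rate_def integral_unique)

lemma Q_rate_fLog_zero: "0 < r \<Longrightarrow> Q_rate fLog r 0 = r"
  by (simp add: Q_rate_fLog Q_log_def)

lemma Q_rate_fLog_bounds: "0 \<le> x \<Longrightarrow> 0 < r \<Longrightarrow> 0 \<le> Q_rate fLog r x \<and> Q_rate fLog r x \<le> r"
  using Q_log_bounds[of "x / r"] by (simp add: Q_rate_fLog mult_left_le)

lemma f_rate_fLog_mono:
  "0 \<le> x \<Longrightarrow> 0 < r \<Longrightarrow> r \<le> r' \<Longrightarrow> f_rate fLog r x \<le> f_rate fLog r' x"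
  unfolding f_rate_def by (intro fLog_antimono) (auto simp: divide_left_mono)

lemma Q_rate_fLog_mono:
  assumes x: "0 \<le> x" and r: "0 < r" "r \<le> r'"
  shows "Q_rate fLog r x \<le> Q_rate fLog r' x"
proof -
  have "integral {x..} (f_rate fLog r) \<le> integral {x..} (f_rate fLog r')"
    using x r has_integral_f_rate_fLog[of x r] has_integral_f_rate_fLog[of x r']
    by (intro integral_le f_rate_fLog_mono) (auto simp: has_integral_integrable)
  moreover have "x * f_rate fLog r x \<le> x * f_rate fLog r' x"
    using x r by (intro mult_left_mono f_rate_fLog_mono) auto
  ultimately show ?thesis
    by (simp add: Q_rate_def)
qed

lemma continuous_on_Q_rate_fLog:
  assumes "0 < a" "0 \<le> x"
  shows "continuous_on {a..b} (\<lambda>r. Q_rate fLog r x)"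
proof -
  have "continuous_on {a..b} (\<lambda>r. r * Q_log (x / r))"
    unfolding Q_log_def using assms two_le_exp_1
    by (intro continuous_intros) (auto simp: min_def)
  then show ?thesis
    by (rule continuous_on_eq) (use assms in \<open>auto simp: Q_rate_fLog\<close>)
qed

lemma continuous_on_ef_total_fLog:
  assumes "0 < a" "\<forall>j\<in>S. 0 < u j" "\<forall>j\<in>S. 0 \<le> c j"
  shows "continuous_on {a..b} (ef_total fLog S u c)"
  unfolding ef_total_def[abs_def] P_rate_def using assms
  by (intro continuous_on_sum continuous_on_mult_left continuous_on_Q_rate_fLog) auto

lemma ef_total_fLog_bounds:
  assumes "\<forall>j\<in>S. 0 < u j" "\<forall>j\<in>S. 0 \<le> c j" "0 < r"
  shows "0 \<le> ef_total fLog S u c r" and "ef_total fLog S u c r \<le> r * (\<Sum>j\<in>S. u j)"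
proof -
  have P: "0 \<le> P_rate fLog (u j) r (c j) \<and> P_rate fLog (u j) r (c j) \<le> u j * r" if "j \<in> S" for j
  proof -
    have "0 < u j" "0 \<le> c j / u j"
      using that assms by auto
    then show ?thesis
      using Q_rate_fLog_bounds[of "c j / u j" r] assms(3) by (simp add: P_rate_def)
  qed
  then show "0 \<le> ef_total fLog S u c r"
    unfolding ef_total_def by (intro sum_nonneg) auto
  have "ef_total fLog S u c r \<le> (\<Sum>j\<in>S. u j * r)"
    unfolding ef_total_def using P by (intro sum_mono) auto
  then show "ef_total fLog S u c r \<le> r * (\<Sum>j\<in>S. u j)"
    by (simp add: sum_distrib_left mult.commute)
qed

lemma ef_total_fLog_mono:
  assumes "\<forall>j\<in>S. 0 < u j" "\<forall>j\<in>S. 0 \<le> c j" "0 < r" "r \<le> r'"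
  shows "ef_total fLog S u c r \<le> ef_total fLog S u c r'"
  unfolding ef_total_def P_rate_def using assms
  by (intro sum_mono mult_left_mono Q_rate_fLog_mono) auto

lemma ef_total_remove_zero_cost:
  assumes "finite S" "i \<in> S" "c i = 0" "0 < r"
  shows "ef_total fLog S u c r = u i * r + ef_total fLog (S - {i}) u c r"
  using assms by (simp add: ef_total_def sum.remove P_rate_def Q_rate_fLog_zero)

lemma stopping_rate_eqI:
  assumes "0 < r" "ef_total f S u c r = B" "\<And>r'. r < r' \<Longrightarrow> B < ef_total f S u c r'"
  shows "stopping_rate f S u c B = r"
  unfolding stopping_rate_def
proof (rule Greatest_equality)
  show "0 < r \<and> ef_total f S u c r = B"
    using assms by simp
  show "r' \<le> r" if "0 < r' \<and> ef_total f S u c r' = B" for r'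
    using that assms(3)[of r'] by force
qed

text \<open>A seller of cost \<open>0\<close> makes the total payment grow at least linearly in the rate,
  so the stopping rate exists and is the unique root.\<close>
lemma stopping_rate_fLog:
  assumes S: "finite S" "i \<in> S" and u: "\<forall>j\<in>S. 0 < u j" and c: "\<forall>j\<in>S. 0 \<le> c j"
    and ci: "c i = 0" and B: "0 < B"
  shows "0 < stopping_rate fLog S u c B \<and> ef_total fLog S u c (stopping_rate fLog S u c B) = B"
proof -
  let ?G = "ef_total fLog S u c"
  define U where "U = (\<Sum>j\<in>S. u j)"
  have ui: "0 < u i"
    using u S by simp
  have Ui: "u i \<le> U"
    unfolding U_def using S u by (intro member_le_sum) (auto simp: less_imp_le)
  have G_lower: "u i * r \<le> ?G r" if "0 < r" for r
    using ef_total_remove_zero_cost[of S i c, OF S ci that] ef_total_fLog_bounds(1)[of "S - {i}" u c r] u c that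
    by simp
  have G_strict: "?G r < ?G r'" if "0 < r" "r < r'" for r r'
  proof -
    have "u i * r < u i * r'"
      using ui that by simp
    then show ?thesis
      using ef_total_remove_zero_cost[of S i c, OF S ci] ef_total_fLog_mono[of "S - {i}" u c r r'] u c that
      by simp
  qed
  define a where "a = B / (2 * U)"
  define b where "b = 2 * B / u i"
  have a: "0 < a"
    using B ui Ui by (simp add: a_def)
  have ab: "a \<le> b"
    unfolding a_def b_def using B ui Ui by (simp add: frac_le)
  have "?G a \<le> a * U"
    using ef_total_fLog_bounds(2)[OF u c a] by (simp add: U_def)
  also have "\<dots> \<le> B"
    using B ui Ui by (simp add: a_def)
  finally have "?G a \<le> B" .
  moreover have "B \<le> ?G b"
    using G_lower[of b] a ab ui B by (simp add: b_def)
  ultimately obtain r where r: "a \<le> r" "?G r = B"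
    using IVT'[OF _ _ ab continuous_on_ef_total_fLog[OF a u c]] by blast
  then have "stopping_rate fLog S u c B = r"
    using a G_strict by (intro stopping_rate_eqI) auto
  then show ?thesis
    using r a by simp
qed

lemma truthful_rate_fLog:
  assumes "finite S" "i \<in> S" "\<forall>j\<in>S. 0 < u j" "\<forall>j\<in>S. 0 \<le> c j" "0 < B"
  shows "0 < truthful_rate fLog S u c B i \<and>
    ef_total fLog S u (c(i := 0)) (truthful_rate fLog S u c B i) = B"
  unfolding truthful_rate_def using assms by (intro stopping_rate_fLog) auto

text \<open>Setting the cost of seller \<open>k\<close> to \<open>0\<close> raises its payment from \<open>u\<^sub>k r Q\<^sub>1(x\<^sub>k/r)\<close> to \<open>u\<^sub>k r\<close>,
  and \<open>1 - Q\<^sub>1(t) \<le> e t\<close>.\<close>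
lemma ef_total_fLog_update_zero_le:
  assumes S: "finite S" "k \<in> S" and u: "\<forall>j\<in>S. 0 < u j" and c: "\<forall>j\<in>S. 0 \<le> c j" and r: "0 < r"
  shows "ef_total fLog S u (c(k := 0)) r \<le> ef_total fLog S u c r + exp 1 * c k"
proof -
  define x where "x = c k / u k"
  have x: "0 \<le> x" "u k * x = c k"
    using S u c by (auto simp: x_def)
  have rest: "ef_total fLog (S - {k}) u (c(k := 0)) r = ef_total fLog (S - {k}) u c r"
    by (simp add: ef_total_def)
  have "u k * r * (1 - Q_log (x / r)) \<le> u k * r * (exp 1 * (x / r))"
    using one_minus_Q_log_le[of "x / r"] x r S u by (intro mult_left_mono) auto
  also have "\<dots> = exp 1 * c k"
    using r x by (simp add: field_simps)
  finally have "u k * r \<le> u k * (r * Q_log (x / r)) + exp 1 * c k"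
    by (simp add: algebra_simps)
  moreover have "ef_total fLog S u (c(k := 0)) r = u k * r + ef_total fLog (S - {k}) u c r"
    using ef_total_remove_zero_cost[of S k "c(k := 0)", OF S _ r] rest by simp
  moreover have "ef_total fLog S u c r = u k * (r * Q_log (x / r)) + ef_total fLog (S - {k}) u c r"
    using S x r by (simp add: ef_total_def sum.remove P_rate_def Q_rate_fLog x_def)
  ultimately show ?thesis
    by simp
qed

lemma fractional_utility_le_utility_at_rate:
  assumes S: "finite S" and u: "\<forall>j\<in>S. 0 < u j" and c: "\<forall>j\<in>S. 0 \<le> c j"
    and R: "0 < R" and B: "0 < B" and D: "0 \<le> D"
    and payment: "B \<le> ef_total fLog S u c R + exp 1 * D"
    and \<alpha>: "\<forall>j\<in>S. 0 \<le> \<alpha> j \<and> \<alpha> j \<le> 1" and budget: "(\<Sum>j\<in>S. c j * \<alpha> j) \<le> B"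
  shows "(1 - 1 / exp 1) * (1 - exp 1 * (D / B)) * (\<Sum>j\<in>S. u j * \<alpha> j)
    \<le> (\<Sum>j\<in>S. u j * f_rate fLog R (c j / u j))"
proof -
  define x where "x j = c j / u j" for j
  have x: "0 \<le> x j" "u j * x j = c j" if "j \<in> S" for j
    using that u c by (auto simp: x_def)
  define U where "U = (\<Sum>j\<in>S. u j * \<alpha> j)"
  define A where "A = (\<Sum>j\<in>S. u j * fLog (x j / R))"
  define E where "E = ef_total fLog S u c R"
  have U: "0 \<le> U"
    unfolding U_def using u \<alpha> by (intro sum_nonneg) auto
  have A: "0 \<le> A"
    unfolding A_def using u by (intro sum_nonneg mult_nonneg_nonneg) (auto simp: fLog_nonneg)
  have E_eq: "E = (\<Sum>j\<in>S. u j * (R * Q_log (x j / R)))"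
    unfolding E_def ef_total_def P_rate_def x_def using u c R by (intro sum.cong) (auto simp: Q_rate_fLog)
  have E_le: "E \<le> exp 1 * R * A"
  proof -
    have "u j * R * Q_log (x j / R) \<le> u j * R * (exp 1 * fLog (x j / R))" if "j \<in> S" for j
      using that x u R by (intro mult_left_mono Q_log_le_exp_fLog) auto
    then have "E \<le> (\<Sum>j\<in>S. exp 1 * R * (u j * fLog (x j / R)))"
      unfolding E_eq by (intro sum_mono) (simp add: algebra_simps)
    then show ?thesis
      by (simp add: A_def sum_distrib_left)
  qed
  have "(1 - 1 / exp 1) * U = (\<Sum>j\<in>S. u j * ((1 - 1 / exp 1) * \<alpha> j))"
    unfolding U_def by (simp add: sum_distrib_left algebra_simps)
  also have "\<dots> \<le> (\<Sum>j\<in>S. u j * (fLog (x j / R) + (\<alpha> j * (x j / R) - Q_log (x j / R)) / exp 1))"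
    using u \<alpha> x R by (intro sum_mono mult_left_mono fraction_le_fLog_plus_slack) auto
  also have "\<dots> = (\<Sum>j\<in>S. u j * fLog (x j / R) + c j * \<alpha> j / (exp 1 * R)
      - u j * (R * Q_log (x j / R)) / (exp 1 * R))"
    using x(2)[symmetric] R by (intro sum.cong) (auto simp: field_simps)
  also have "\<dots> = A + ((\<Sum>j\<in>S. c j * \<alpha> j) - E) / (exp 1 * R)"
    unfolding A_def E_eq by (simp add: sum.distrib sum_subtractf sum_divide_distrib diff_divide_distrib)
  also have "\<dots> \<le> A + exp 1 * D / (exp 1 * R)"
    using budget payment R unfolding E_def by (intro add_left_mono divide_right_mono) auto
  also have "\<dots> = A + D / R"
    by simp
  finally have U_le: "(1 - 1 / exp 1) * U \<le> A + D / R" .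
  define s where "s = 1 - exp 1 * (D / B)"
  have kU: "0 \<le> (1 - 1 / exp 1) * U"
    using U two_le_exp_1 by simp
  have "(1 - 1 / exp 1) * s * U \<le> A"
  proof (cases "0 \<le> s")
    case False
    then have "s * ((1 - 1 / exp 1) * U) \<le> 0"
      using kU by (intro mult_nonpos_nonneg) auto
    then show ?thesis
      using A by (simp add: mult.commute mult.left_commute)
  next
    case True
    have "B - exp 1 * D \<le> exp 1 * A * R"
      using payment E_le unfolding E_def[symmetric] by (simp add: mult.commute mult.left_commute)
    then have "(B - exp 1 * D) / R \<le> exp 1 * A"
      using R by (simp add: pos_divide_le_eq)
    then have "(B - exp 1 * D) / R * (D / B) \<le> exp 1 * A * (D / B)"
      using B D by (intro mult_right_mono) auto
    moreover have "s * (A + D / R) = s * A + (B - exp 1 * D) / R * (D / B)"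
      using B R by (simp add: s_def field_simps)
    moreover have "s * ((1 - 1 / exp 1) * U) \<le> s * (A + D / R)"
      using U_le True by (intro mult_left_mono)
    ultimately have "s * ((1 - 1 / exp 1) * U) \<le> s * A + exp 1 * A * (D / B)"
      by linarith
    also have "\<dots> = A"
      by (simp add: s_def algebra_simps)
    finally show ?thesis
      by (simp add: mult.commute mult.left_commute)
  qed
  then show ?thesis
    by (simp add: s_def U_def A_def x_def f_rate_def)
qed

lemma utility_at_rate_le_truthful_utility:
  assumes "\<forall>j\<in>S. 0 < u j" "\<forall>j\<in>S. 0 \<le> c j" "0 < R" "\<forall>j\<in>S. R \<le> truthful_rate fLog S u c B j"
  shows "(\<Sum>j\<in>S. u j * f_rate fLog R (c j / u j)) \<le> truthful_utility fLog S u c B"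
  unfolding truthful_utility_def using assms
  by (intro sum_mono mult_left_mono f_rate_fLog_mono) auto

lemma mult_opt_utility_le:
  assumes S: "finite S" and B: "0 \<le> B" and u: "\<forall>j\<in>S. 0 < u j" and M: "0 \<le> M"
    and bound: "\<And>\<alpha>. \<forall>j\<in>S. 0 \<le> \<alpha> j \<and> \<alpha> j \<le> 1 \<Longrightarrow> (\<Sum>j\<in>S. c j * \<alpha> j) \<le> B \<Longrightarrow>
      k * (\<Sum>j\<in>S. u j * \<alpha> j) \<le> M"
  shows "k * opt_utility S u c B \<le> M"
proof -
  define Opt where "Opt = {(\<Sum>j\<in>S. u j * \<alpha> j) | \<alpha>.
      (\<forall>j\<in>S. 0 \<le> \<alpha> j \<and> \<alpha> j \<le> 1) \<and> (\<Sum>j\<in>S. c j * \<alpha> j) \<le> B}"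
  have opt: "opt_utility S u c B = Sup Opt"
    by (simp add: opt_utility_def Opt_def)
  have zero: "0 \<in> Opt"
    unfolding Opt_def using B by (intro CollectI exI[of _ "\<lambda>_. 0"]) auto
  show ?thesis
  proof (cases "0 < k")
    case True
    have "Sup Opt \<le> M / k"
      using zero bound True unfolding Opt_def
      by (intro cSup_least) (auto simp: pos_le_divide_eq mult.commute)
    then show ?thesis
      using True by (simp add: opt pos_le_divide_eq mult.commute)
  next
    case False
    have "bdd_above Opt"
    proof (rule bdd_aboveI)
      show "y \<le> (\<Sum>j\<in>S. u j)" if "y \<in> Opt" for y
        using that u unfolding Opt_def by (force intro: sum_mono simp: mult_left_le less_imp_le)
    qed
    then have "0 \<le> opt_utility S u c B"
      using zero by (simp add: opt cSup_upper)
    then show ?thesis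
      using False M by (smt (verit) mult_nonpos_nonneg)
  qed
qed

lemma fractional_utility_le_truthful_utility:
  assumes S: "finite S" and B: "0 < B" and u: "\<forall>j\<in>S. 0 < u j" and c: "\<forall>j\<in>S. 0 \<le> c j"
    and \<alpha>: "\<forall>j\<in>S. 0 \<le> \<alpha> j \<and> \<alpha> j \<le> 1" and budget: "(\<Sum>j\<in>S. c j * \<alpha> j) \<le> B"
  shows "(1 - 1 / exp 1) * (1 - exp 1 * (cmax S c / B)) * (\<Sum>j\<in>S. u j * \<alpha> j)
    \<le> truthful_utility fLog S u c B"
proof (cases "S = {}")
  case True
  then show ?thesis
    by (simp add: truthful_utility_def)
next
  case False
  define r where "r = truthful_rate fLog S u c B"
  define k where "k = arg_min_on r S"
  have k: "k \<in> S" "\<forall>i\<in>S. r k \<le> r i"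
    using S False by (auto simp: k_def intro: arg_min_if_finite arg_min_least)
  have rk: "0 < r k" "ef_total fLog S u (c(k := 0)) (r k) = B"
    using truthful_rate_fLog[OF S k(1) u c B] by (simp_all add: r_def)
  have ck: "0 \<le> c k" "c k \<le> cmax S c"
    using S k(1) c by (simp_all add: cmax_def)
  then have "exp 1 * c k \<le> exp 1 * cmax S c"
    by simp
  then have "B \<le> ef_total fLog S u c (r k) + exp 1 * cmax S c"
    using ef_total_fLog_update_zero_le[OF S k(1) u c rk(1)] rk(2) by linarith
  then have "(1 - 1 / exp 1) * (1 - exp 1 * (cmax S c / B)) * (\<Sum>j\<in>S. u j * \<alpha> j)
      \<le> (\<Sum>j\<in>S. u j * f_rate fLog (r k) (c j / u j))"
    using fractional_utility_le_utility_at_rate[OF S u c rk(1) B _ _ \<alpha> budget] ck by simp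
  also have "\<dots> \<le> truthful_utility fLog S u c B"
    using u c rk(1) k(2) by (intro utility_at_rate_le_truthful_utility) (auto simp: r_def)
  finally show ?thesis .
qed

theorem lemma11:
  shows "\<exists>\<rho> :: real \<Rightarrow> real. (\<rho> \<longlongrightarrow> 1 - 1 / exp 1) (at_right 0) \<and>
    (\<forall>(S :: nat set) (u :: nat \<Rightarrow> real) (c :: nat \<Rightarrow> real) (B :: real).
       finite S \<longrightarrow> B > 0 \<longrightarrow> (\<forall>i\<in>S. u i > 0) \<longrightarrow> (\<forall>i\<in>S. c i \<ge> 0) \<longrightarrow>
       truthful_utility fLog S u c B \<ge> \<rho> (cmax S c / B) * opt_utility S u c B)"
proof (intro exI conjI allI impI)
  let ?\<rho> = "\<lambda>\<theta>. (1 - 1 / exp 1) * (1 - exp 1 * \<theta>)"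
  show "(?\<rho> \<longlongrightarrow> 1 - 1 / exp 1) (at_right 0)"
    by (rule tendsto_eq_intros refl)+ simp
  fix S :: "nat set" and u c :: "nat \<Rightarrow> real" and B :: real
  assume S: "finite S" and B: "0 < B" and u: "\<forall>i\<in>S. 0 < u i" and c: "\<forall>i\<in>S. 0 \<le> c i"
  have "0 \<le> truthful_utility fLog S u c B"
    unfolding truthful_utility_def f_rate_def using u
    by (intro sum_nonneg mult_nonneg_nonneg) (auto simp: fLog_nonneg)
  then show "?\<rho> (cmax S c / B) * opt_utility S u c B \<le> truthful_utility fLog S u c B"
    using S B u c fractional_utility_le_truthful_utility
    by (intro mult_opt_utility_le) (auto simp: mult.assoc)
qed

end
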